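(* Let $k\ge2$ and let $G=F_k$ be the free group of rank $k$, presented as $G=\langle S_{2k}\mid K\rangle$ with $S_{2k}=\{s_1,\dots,s_{2k}\}$ and $K(s_i,s_j)=0$ if and only if $|i-j|=k$. Let $\mathcal{A}$ be a finite alphabet, $A$ a $\{0,1\}$-matrix indexed by $\mathcal{A}$, and $X=X_{\mathbf{A},\mathbf{A}^t}$ the Markov tree shift on $F_k$ given by the $2k$-tuple $(A_1,\dots,A_k,A_1^t,\dots,A_k^t)$ with $A_1=\cdots=A_k=A$. Then the limit $\lim_{n\to\infty}\log p_n/|\Delta_n|$ exists and equals $h^{(s)}(X)$.
   Context: For a $\{0,1\}$-matrix $K$ indexed by generators $S=\{s_1,\dots,s_N\}$, $\langle S\mid K\rangle$ is the semigroup generated by $S$ with relations $s_is_j=1_G$ iff $K(s_i,s_j)=0$; here this is $F_k$ with $s_{i+k}=s_i^{-1}$. Every $g$ has a unique minimal (reduced) word $g=g_1\cdots g_n$, $|g|=n$. $\Delta_n=\{h\in G:|h|\le n\}$ and $\bar{\Delta}^{(g)}_n=\{gh:|h|\le n,\ |gh|=|g|+|h|\}$. A pattern $u:H\to\mathcal{A}$ ($H$ finite) is accepted by $t\in\mathcal{A}^G$ if there is $g$ with $t_{gh}=u_h$ for all $h\in H$; $p_n$ (resp. $p^{(g)}_n$) is the number of patterns on $\Delta_n$ (resp. $\bar{\Delta}^{(g)}_n$) accepted by some $t\in X$. For an $N$-tuple $(B_1,\dots,B_N)$ of $\{0,1\}$-matrices indexed by $\mathcal{A}$ the Markov tree shift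 is $\{t\in\mathcal{A}^G: B_i(t_g,t_{gs_i})=1 \text{ whenever } |gs_i|=|g|+1\}$. $A^t$ is the transpose. The $i$th stem entropy is $h^{(s_i)}(X)=\limsup_n\log p^{(s_i)}_n/|\bar{\Delta}^{(s_i)}_n|$; these coincide (as $K$ is primitive for $k\ge2$) and $h^{(s)}(X)$ is their common value. *)

theory Defs
  imports Complex_Main "HOL-Library.Extended_Real" "HOL-Library.Liminf_Limsup"
begin

text \<open>Free group F_k presented as the semigroup generated by s_0,...,s_{2k-1}
  (0-based: paper's s_{i+1} is index i) with s_i s_j = 1 iff K(s_i,s_j)=0 iff |i-j|=k.
  Group elements are the reduced (minimal) words.\<close>

definition Kmat :: "nat \<Rightarrow> nat \<Rightarrow> nat \<Rightarrow> bool" where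
  "Kmat k i j \<longleftrightarrow> \<not> (i = j + k \<or> j = i + k)"

definition reduced :: "nat \<Rightarrow> nat list \<Rightarrow> bool" where
  "reduced k w \<longleftrightarrow> set w \<subseteq> {..<2*k} \<and>
     (\<forall>i. Suc i < length w \<longrightarrow> Kmat k (w ! i) (w ! Suc i))"

definition FG :: "nat \<Rightarrow> nat list set" where
  "FG k = {w. reduced k w}"

definition app1 :: "nat \<Rightarrow> nat list \<Rightarrow> nat \<Rightarrow> nat list" where
  "app1 k g x = (if g \<noteq> [] \<and> \<not> Kmat k (last g) x then butlast g else g @ [x])"

text \<open>Group product of reduced words: the reduced form of the concatenation.\<close>
definition fmult :: "nat \<Rightarrow> nat list \<Rightarrow> nat list \<Rightarrow> nat list" where
  "fmult k g h = foldl (app1 k) g h"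

definition Delta :: "nat \<Rightarrow> nat \<Rightarrow> nat list set" where
  "Delta k n = {h \<in> FG k. length h \<le> n}"

definition Delta_bar :: "nat \<Rightarrow> nat list \<Rightarrow> nat \<Rightarrow> nat list set" where
  "Delta_bar k g n = {fmult k g h | h. h \<in> FG k \<and> length h \<le> n \<and>
                         length (fmult k g h) = length g + length h}"

text \<open>Markov tree shift given by an N-tuple (B_0,...,B_{N-1}) of 0-1 matrices (as relations).\<close>
definition markov_tree_shift :: "nat \<Rightarrow> (nat \<Rightarrow> 'a \<Rightarrow> 'a \<Rightarrow> bool) \<Rightarrow> (nat list \<Rightarrow> 'a) set" where
  "markov_tree_shift k B = {t. \<forall>g\<in>FG k. \<forall>i<2*k.
      length (fmult k g [i]) = length g + 1 \<longrightarrow> B i (t g) (t (fmult k g [i]))}"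

definition accepts :: "nat \<Rightarrow> (nat list \<Rightarrow> 'a) \<Rightarrow> nat list set \<Rightarrow> (nat list \<Rightarrow> 'a) \<Rightarrow> bool" where
  "accepts k t H u \<longleftrightarrow> (\<exists>g\<in>FG k. \<forall>h\<in>H. t (fmult k g h) = u h)"

text \<open>Number of patterns on H accepted by some t in X (patterns are functions on H,
  extended by undefined outside H).\<close>
definition pcount :: "nat \<Rightarrow> (nat list \<Rightarrow> 'a) set \<Rightarrow> nat list set \<Rightarrow> nat" where
  "pcount k X H = card {u. (\<forall>h. h \<notin> H \<longrightarrow> u h = undefined) \<and> (\<exists>t\<in>X. accepts k t H u)}"

text \<open>The i-th stem entropy (generator s_i given by the one-letter word [i]).\<close>
definition stem_entropy :: "nat \<Rightarrow> (nat list \<Rightarrow> 'a) set \<Rightarrow> nat \<Rightarrow> ereal" where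
  "stem_entropy k X i = limsup (\<lambda>n. ereal (ln (real (pcount k X (Delta_bar k [i] n)))
                                          / real (card (Delta_bar k [i] n))))"

definition AAt :: "nat \<Rightarrow> ('a \<Rightarrow> 'a \<Rightarrow> bool) \<Rightarrow> nat \<Rightarrow> 'a \<Rightarrow> 'a \<Rightarrow> bool" where
  "AAt k A i = (if i < k then A else (\<lambda>a b. A b a))"

end

(* Every symbol occurring in a configuration of X has a successor along A and a predecessor
   along A among such symbols.  Hence the patterns of X on a ball or on a stem are exactly the
   locally admissible labellings by these symbols: such a labelling extends outwards to a
   configuration.  Counting admissible labellings of subtrees level by level gives the recursion
   tree_count, each vertex having q = 2k - 1 children, k of them along the type of the edge
   above it and k - 1 along the converse type.  The largest logarithm m n of the branch sums
   over both types satisfies m (n+1) <= q m n + ln |E|, so m n / q^n converges, and a defect in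
   this inequality forces a label whose branch sums in both directions are nearly maximal,
   which gives matching lower bounds.  So the logarithmic pattern counts grow like L q^n on
   stems and like 2k L q^n on balls, whose sizes are asymptotic to q^(n+1) / (q - 1) and
   2k q^(n+1) / (q - 1); both ratios tend to L (q - 1) / q. *)

theory Submission
  imports Defs "HOL-Library.FuncSet" "HOL-Library.Disjoint_Sets"
begin

section \<open>Estimates for sums and for sequences growing like q^n\<close>

lemma ln_sum_le_ln_card_add:
  fixes f :: "'b \<Rightarrow> real"
  assumes "finite S" "S \<noteq> {}" "\<And>x. x \<in> S \<Longrightarrow> 0 < f x"
  shows "\<exists>x\<in>S. ln (\<Sum>y\<in>S. f y) \<le> ln (real (card S)) + ln (f x)"
proof -
  have "Max (f ` S) \<in> f ` S"
    using assms(1,2) by (intro Max_in) auto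
  then obtain x where x: "x \<in> S" "f x = Max (f ` S)"
    by auto
  have "(\<Sum>y\<in>S. f y) \<le> real (card S) * f x"
    using x assms(1) by (intro sum_bounded_above) simp
  moreover have "0 < (\<Sum>y\<in>S. f y)"
    using assms by (intro sum_pos) auto
  ultimately have "ln (\<Sum>y\<in>S. f y) \<le> ln (real (card S) * f x)"
    by (intro ln_mono) auto
  also have "\<dots> = ln (real (card S)) + ln (f x)"
    using assms(1,2) assms(3)[OF x(1)] by (simp add: ln_mult card_gt_0_iff)
  finally show ?thesis using x(1) by blast
qed

lemma weighted_sum_near_max:
  fixes \<alpha> \<beta> x y m d :: real
  assumes "1 \<le> \<alpha>" "1 \<le> \<beta>" "x \<le> m" "y \<le> m" "0 \<le> d" "(\<alpha> + \<beta>) * m - d \<le> \<alpha> * x + \<beta> * y"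
  shows "m - d \<le> x" "m - d \<le> y"
proof -
  have "\<beta> * y \<le> \<beta> * m" "\<alpha> * x \<le> \<alpha> * m"
    using assms(1-4) by (simp_all add: mult_left_mono)
  have "\<alpha> * (m - x) \<le> d"
    using assms(6) \<open>\<beta> * y \<le> \<beta> * m\<close> by (simp add: algebra_simps)
  moreover have "m - x \<le> \<alpha> * (m - x)"
    using assms(1,3) mult_right_mono[of 1 \<alpha> "m - x"] by simp
  ultimately show "m - d \<le> x" by simp
  have "\<beta> * (m - y) \<le> d"
    using assms(6) \<open>\<alpha> * x \<le> \<alpha> * m\<close> by (simp add: algebra_simps)
  moreover have "m - y \<le> \<beta> * (m - y)"
    using assms(2,4) mult_right_mono[of 1 \<beta> "m - y"] by simp
  ultimately show "m - d \<le> y" by simp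
qed

lemma geometric_sum_over_last:
  fixes q :: real
  assumes "1 < q"
  shows "(\<lambda>n. (\<Sum>l\<le>n. q ^ l) / q ^ n) \<longlonglongrightarrow> q / (q - 1)"
proof -
  have "(\<Sum>l\<le>n. q ^ l) / q ^ n = (q - inverse (q ^ n)) / (q - 1)" for n
  proof -
    have "(\<Sum>l\<le>n. q ^ l) = (\<Sum>l<Suc n. q ^ l)"
      by (simp add: lessThan_Suc_atMost)
    also have "\<dots> = (q ^ Suc n - 1) / (q - 1)"
      using assms by (intro geometric_sum) simp
    finally have "(\<Sum>l\<le>n. q ^ l) = (q ^ Suc n - 1) / (q - 1)" .
    then show ?thesis
      using assms by (simp only:) (simp add: field_simps)
  qed
  moreover have "(\<lambda>n. (q - inverse (q ^ n)) / (q - 1)) \<longlonglongrightarrow> (q - 0) / (q - 1)"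
    using assms by (intro tendsto_intros LIMSEQ_inverse_realpow_zero) auto
  ultimately show ?thesis by simp
qed

lemma tendsto_ratio_of_normalized:
  fixes a b :: "nat \<Rightarrow> real"
  assumes "(\<lambda>n. a n / s n) \<longlonglongrightarrow> \<alpha>" "(\<lambda>n. b n / s n) \<longlonglongrightarrow> \<beta>" "\<beta> \<noteq> 0" "\<And>n. s n \<noteq> 0"
  shows "(\<lambda>n. a n / b n) \<longlonglongrightarrow> \<alpha> / \<beta>"
proof -
  have "(\<lambda>n. (a n / s n) / (b n / s n)) \<longlonglongrightarrow> \<alpha> / \<beta>"
    using assms(1-3) by (rule tendsto_divide)
  then show ?thesis using assms(4) by simp
qed

lemma normalized_growth_convergent:
  fixes m :: "nat \<Rightarrow> real"
  assumes q: "1 < q" and c: "0 \<le> c" and nonneg: "\<And>n. 0 \<le> m n"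
    and step: "\<And>n. m (Suc n) \<le> q * m n + c"
  shows "convergent (\<lambda>n. m n / q ^ n)"
    and "(\<lambda>n. (q * m n + c - m (Suc n)) / q ^ n) \<longlonglongrightarrow> 0"
proof -
  define D where "D n = m n / q ^ n + c / ((q - 1) * q ^ n)" for n
  have "D (Suc n) \<le> D n" for n
  proof -
    have "m (Suc n) / q ^ Suc n \<le> (q * m n + c) / q ^ Suc n"
      using step q by (intro divide_right_mono) auto
    moreover have "c / q ^ Suc n + c / ((q - 1) * q ^ Suc n) = c / ((q - 1) * q ^ n)"
      using q by (simp add: field_simps)
    ultimately show ?thesis
      using q unfolding D_def by (simp add: add_divide_distrib)
  qed
  moreover have "0 \<le> D n" for n
    using q c nonneg unfolding D_def by simp
  ultimately obtain L where "D \<longlonglongrightarrow> L"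
    using decseq_convergent[of D] decseq_SucI[of D] by blast
  moreover have "(\<lambda>n. c / (q - 1) * inverse (q ^ n)) \<longlonglongrightarrow> c / (q - 1) * 0"
    using q by (intro tendsto_intros LIMSEQ_inverse_realpow_zero) auto
  ultimately have lim: "(\<lambda>n. D n - c / (q - 1) * inverse (q ^ n)) \<longlonglongrightarrow> L - 0"
    by (intro tendsto_diff) simp_all
  moreover have "D n - c / (q - 1) * inverse (q ^ n) = m n / q ^ n" for n
    unfolding D_def by (simp add: field_simps)
  ultimately have M: "(\<lambda>n. m n / q ^ n) \<longlonglongrightarrow> L" by simp
  then show "convergent (\<lambda>n. m n / q ^ n)" by (rule convergentI)
  have "(q * m n + c - m (Suc n)) / q ^ n
      = q * (m n / q ^ n) - q * (m (Suc n) / q ^ Suc n) + c * inverse (q ^ n)" for n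
    using q by (simp add: field_simps)
  moreover have "(\<lambda>n. q * (m n / q ^ n) - q * (m (Suc n) / q ^ Suc n) + c * inverse (q ^ n))
      \<longlonglongrightarrow> q * L - q * L + c * 0"
    using q M LIMSEQ_Suc[OF M] by (intro tendsto_intros LIMSEQ_inverse_realpow_zero) auto
  ultimately show "(\<lambda>n. (q * m n + c - m (Suc n)) / q ^ n) \<longlonglongrightarrow> 0" by simp
qed

lemma normalized_squeeze:
  fixes m d g :: "nat \<Rightarrow> real"
  assumes q: "1 < q" and m: "(\<lambda>n. m n / q ^ n) \<longlonglongrightarrow> L" and d: "(\<lambda>n. d n / q ^ n) \<longlonglongrightarrow> 0"
    and lower: "\<And>n. \<alpha> * (m n - d n) \<le> g n" and upper: "\<And>n. g n \<le> \<alpha> * m n + c"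
  shows "(\<lambda>n. g n / q ^ n) \<longlonglongrightarrow> \<alpha> * L"
proof (rule tendsto_sandwich)
  show "\<forall>\<^sub>F n in sequentially. \<alpha> * (m n / q ^ n - d n / q ^ n) \<le> g n / q ^ n"
    using q lower by (simp add: diff_divide_distrib[symmetric] divide_right_mono)
  show "\<forall>\<^sub>F n in sequentially. g n / q ^ n \<le> \<alpha> * (m n / q ^ n) + c * inverse (q ^ n)"
    using q upper by (simp add: field_simps)
  show "(\<lambda>n. \<alpha> * (m n / q ^ n - d n / q ^ n)) \<longlonglongrightarrow> \<alpha> * L"
    using tendsto_mult_left[OF tendsto_diff[OF m d], of \<alpha>] by simp
  show "(\<lambda>n. \<alpha> * (m n / q ^ n) + c * inverse (q ^ n)) \<longlonglongrightarrow> \<alpha> * L"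
    using q tendsto_add[OF tendsto_mult_left[OF m, of \<alpha>]
        tendsto_mult_left[OF LIMSEQ_inverse_realpow_zero, of q c]]
    by simp
qed

lemma card_eq_sum_card_fibres:
  assumes "finite S" "finite F" "g ` S \<subseteq> F"
  shows "card S = (\<Sum>b\<in>F. card {x\<in>S. g x = b})"
proof -
  have "S = (\<Union>b\<in>F. {x\<in>S. g x = b})" using assms(3) by auto
  also have "card \<dots> = (\<Sum>b\<in>F. card {x\<in>S. g x = b})"
    using assms(1,2) by (intro card_UN_disjoint) auto
  finally show ?thesis .
qed

lemma card_glued_functions:
  fixes R :: "'j \<Rightarrow> 'v set" and Q :: "'j \<Rightarrow> ('v \<Rightarrow> 'b) set"
  assumes J: "finite J" and disj: "disjoint_family_on R J" and w: "w \<notin> (\<Union>j\<in>J. R j)"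
    and Q: "\<And>j. j \<in> J \<Longrightarrow> Q j \<subseteq> extensional (R j)"
  shows "card {f \<in> extensional (insert w (\<Union>j\<in>J. R j)). f w = a \<and> (\<forall>j\<in>J. restrict f (R j) \<in> Q j)}
           = (\<Prod>j\<in>J. card (Q j))"
proof -
  let ?S = "{f \<in> extensional (insert w (\<Union>j\<in>J. R j)). f w = a \<and> (\<forall>j\<in>J. restrict f (R j) \<in> Q j)}"
  define split :: "('v \<Rightarrow> 'b) \<Rightarrow> 'j \<Rightarrow> 'v \<Rightarrow> 'b"
    where "split f = restrict (\<lambda>j. restrict f (R j)) J" for f
  define glue :: "('j \<Rightarrow> 'v \<Rightarrow> 'b) \<Rightarrow> 'v \<Rightarrow> 'b"
    where "glue g v = (if v = w then a else if v \<in> (\<Union>j\<in>J. R j)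
      then g (THE j. j \<in> J \<and> v \<in> R j) v else undefined)" for g v
  have glue_at: "glue g v = g j v" if "j \<in> J" "v \<in> R j" for g j v
  proof -
    have "(THE j'. j' \<in> J \<and> v \<in> R j') = j"
      using disj that by (intro the_equality) (auto simp: disjoint_family_on_def)
    then show ?thesis using that w by (auto simp: glue_def)
  qed
  have restrict_glue: "restrict (glue g) (R j) = g j" if g: "g \<in> PiE J Q" and j: "j \<in> J" for g j
  proof
    fix v
    have "g j \<in> extensional (R j)" using Q[OF j] PiE_mem[OF g j] by blast
    then show "restrict (glue g) (R j) v = g j v"
      using glue_at[OF j] by (cases "v \<in> R j") (auto simp: extensional_def)
  qed
  have "bij_betw split ?S (PiE J Q)"
  proof (rule bij_betwI[where g = glue])
    show "split \<in> ?S \<rightarrow> PiE J Q"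
      by (auto simp: split_def)
    show "glue \<in> PiE J Q \<rightarrow> ?S"
      using restrict_glue by (auto simp: glue_def extensional_def)
    show "glue (split f) = f" if f: "f \<in> ?S" for f
    proof
      fix v
      show "glue (split f) v = f v"
      proof (cases "v \<in> (\<Union>j\<in>J. R j)")
        case True
        then show ?thesis using glue_at by (auto simp: split_def)
      next
        case False
        then show ?thesis using f by (auto simp: glue_def extensional_def)
      qed
    qed
    show "split (glue g) = g" if "g \<in> PiE J Q" for g
      using that restrict_glue by (auto simp: split_def PiE_def extensional_def)
  qed
  then show ?thesis
    using J by (simp add: bij_betw_same_card card_PiE)
qed

section \<open>Reduced words and cones\<close>

lemma reduced_iff_successively:
  "reduced k w \<longleftrightarrow> set w \<subseteq> {..<2*k} \<and> successively (Kmat k) w"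
  unfolding reduced_def successively_conv_nth by auto

lemma reduced_Nil [simp]: "reduced k []"
  by (simp add: reduced_iff_successively)

lemma reduced_singleton [simp]: "reduced k [x] \<longleftrightarrow> x < 2*k"
  by (simp add: reduced_iff_successively)

lemma reduced_snoc:
  "reduced k (w @ [j]) \<longleftrightarrow> reduced k w \<and> j < 2*k \<and> (w = [] \<or> Kmat k (last w) j)"
  by (auto simp: reduced_iff_successively successively_append_iff)

lemma reduced_appendD: "reduced k (v @ w) \<Longrightarrow> reduced k v \<and> reduced k w"
  by (auto simp: reduced_iff_successively successively_append_iff)

lemma reduced_butlast: "reduced k w \<Longrightarrow> reduced k (butlast w)"
  by (metis append_butlast_last_id butlast.simps(1) reduced_appendD)

lemma last_less_if_reduced: "reduced k w \<Longrightarrow> w \<noteq> [] \<Longrightarrow> last w < 2*k"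
  by (meson last_in_set lessThan_iff reduced_iff_successively subsetD)

lemma fmult_Nil [simp]: "fmult k g [] = g"
  by (simp add: fmult_def)

lemma fmult_snoc: "fmult k g (h @ [j]) = app1 k (fmult k g h) j"
  by (simp add: fmult_def)

lemma fmult_Cons: "fmult k g (x # h) = fmult k (app1 k g x) h"
  by (simp add: fmult_def)

lemma fmult_reduced: "reduced k g \<Longrightarrow> reduced k h \<Longrightarrow> reduced k (fmult k g h)"
proof (induction h rule: rev_induct)
  case (snoc j h)
  then show ?case
    by (auto simp: fmult_snoc app1_def reduced_snoc reduced_butlast)
qed simp

lemma fmult_eq_append: "reduced k (g @ h) \<Longrightarrow> fmult k g h = g @ h"
proof (induction h rule: rev_induct)
  case (snoc j h)
  then show ?case
    using reduced_snoc[of k "g @ h" j] by (auto simp: fmult_snoc app1_def)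
qed simp

lemma length_fmult_le: "length (fmult k g h) \<le> length g + length h"
  by (induction h rule: rev_induct) (auto simp: fmult_snoc app1_def)

lemma fmult_singleton_extends_iff:
  "length (fmult k g [j]) = Suc (length g) \<longleftrightarrow> g = [] \<or> Kmat k (last g) j"
  by (auto simp: fmult_def app1_def)

lemma fmult_singleton_eq: "g = [] \<or> Kmat k (last g) j \<Longrightarrow> fmult k g [j] = g @ [j]"
  by (auto simp: fmult_def app1_def)

definition gen_inv :: "nat \<Rightarrow> nat \<Rightarrow> nat" where
  "gen_inv k j = (if j < k then j + k else j - k)"

lemma gen_inv_less: "j < 2*k \<Longrightarrow> gen_inv k j < 2*k"
  by (auto simp: gen_inv_def)

lemma Kmat_iff_ne_gen_inv: "i < 2*k \<Longrightarrow> j < 2*k \<Longrightarrow> Kmat k i j \<longleftrightarrow> j \<noteq> gen_inv k i"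
  by (auto simp: Kmat_def gen_inv_def)

lemma last_eq_gen_inv:
  assumes "reduced k z" "z \<noteq> []" "j < 2*k" "\<not> Kmat k (last z) j"
  shows "last z = gen_inv k j"
  using assms last_less_if_reduced[OF assms(1,2)] by (auto simp: Kmat_def gen_inv_def)

definition cone :: "nat \<Rightarrow> nat list \<Rightarrow> nat \<Rightarrow> nat list set" where
  "cone k w n = {w @ h | h. length h \<le> n \<and> reduced k (w @ h)}"

definition children :: "nat \<Rightarrow> nat list \<Rightarrow> nat set" where
  "children k w = {j. j < 2*k \<and> reduced k (w @ [j])}"

lemma mem_cone_iff: "v \<in> cone k w n \<longleftrightarrow> reduced k v \<and> (\<exists>h. v = w @ h \<and> length h \<le> n)"
  unfolding cone_def by auto

lemma cone_subset_FG: "cone k w n \<subseteq> FG k"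
  unfolding cone_def FG_def by auto

lemma root_mem_cone: "reduced k w \<Longrightarrow> w \<in> cone k w n"
  by (auto simp: mem_cone_iff)

lemma child_mem_cone: "j \<in> children k w \<Longrightarrow> w @ [j] \<in> cone k (w @ [j]) n"
  by (simp add: children_def root_mem_cone)

lemma finite_cone: "finite (cone k w n)"
proof (rule finite_subset)
  show "cone k w n \<subseteq> {v. set v \<subseteq> {..<2*k} \<and> length v \<le> length w + n}"
    by (auto simp: cone_def reduced_iff_successively)
qed (rule finite_lists_length_le, simp)

lemma finite_children: "finite (children k w)"
  by (simp add: children_def)

lemma Delta_eq_cone: "Delta k n = cone k [] n"
  unfolding Delta_def cone_def FG_def by auto

lemma Delta_bar_eq_cone:
  assumes i: "i < 2*k"
  shows "Delta_bar k [i] n = cone k [i] n"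
proof -
  have extends: "reduced k (i # h)"
    if len: "length (fmult k [i] h) = Suc (length h)" and h: "reduced k h" for h
  proof (cases h)
    case (Cons j h')
    have "Kmat k i j"
    proof (rule ccontr)
      assume "\<not> Kmat k i j"
      then have "fmult k [i] h = fmult k [] h'" by (simp add: Cons fmult_Cons app1_def)
      then show False using len length_fmult_le[of k "[]" h'] Cons by simp
    qed
    then show ?thesis using h i Cons by (simp add: reduced_iff_successively)
  qed (use i in simp)
  show ?thesis
  proof (intro equalityI subsetI)
    fix v assume "v \<in> Delta_bar k [i] n"
    then obtain h where "v = fmult k [i] h" "reduced k h" "length h \<le> n"
        "length (fmult k [i] h) = Suc (length h)"
      unfolding Delta_bar_def FG_def by auto
    with extends show "v \<in> cone k [i] n"
      by (auto simp: cone_def fmult_eq_append)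
  next
    fix v assume "v \<in> cone k [i] n"
    then obtain h where "v = i # h" "length h \<le> n" "reduced k (i # h)"
      by (auto simp: cone_def)
    then show "v \<in> Delta_bar k [i] n"
      unfolding Delta_bar_def FG_def
      using fmult_eq_append[of k "[i]" h] reduced_appendD[of k "[i]" h]
      by (auto intro!: exI[of _ h])
  qed
qed

lemma cone_Suc:
  assumes "reduced k w"
  shows "cone k w (Suc n) = insert w (\<Union>j\<in>children k w. cone k (w @ [j]) n)"
proof (intro equalityI subsetI)
  fix v assume "v \<in> cone k w (Suc n)"
  then obtain h where v: "reduced k v" "v = w @ h" "length h \<le> Suc n"
    by (auto simp: mem_cone_iff)
  show "v \<in> insert w (\<Union>j\<in>children k w. cone k (w @ [j]) n)"
  proof (cases h)
    case (Cons j h')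
    then have "j \<in> children k w"
      using v reduced_appendD[of k "w @ [j]" h'] by (simp add: children_def reduced_snoc)
    then show ?thesis using v Cons by (auto simp: mem_cone_iff)
  qed (use v in simp)
next
  fix v assume "v \<in> insert w (\<Union>j\<in>children k w. cone k (w @ [j]) n)"
  then show "v \<in> cone k w (Suc n)"
    using assms by (auto simp: mem_cone_iff intro: exI[of _ "_ # _"])
qed

lemma mem_child_cone: "v \<in> cone k (w @ [j]) n \<Longrightarrow> length w < length v \<and> v ! length w = j"
  by (auto simp: mem_cone_iff nth_append)

lemma card_cone_Suc:
  assumes "reduced k w"
  shows "card (cone k w (Suc n)) = 1 + (\<Sum>j\<in>children k w. card (cone k (w @ [j]) n))"
proof -
  have "card (\<Union>j\<in>children k w. cone k (w @ [j]) n) = (\<Sum>j\<in>children k w. card (cone k (w @ [j]) n))"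
    using mem_child_cone by (intro card_UN_disjoint finite_children finite_cone ballI) blast+
  moreover have "w \<notin> (\<Union>j\<in>children k w. cone k (w @ [j]) n)"
    using mem_child_cone by blast
  ultimately show ?thesis
    unfolding cone_Suc[OF assms] by (simp add: finite_children finite_cone)
qed

lemma children_Nil: "children k [] = {..<2*k}"
  by (auto simp: children_def)

lemma children_eq:
  assumes "reduced k w" "w \<noteq> []"
  shows "children k w = {..<2*k} - {gen_inv k (last w)}"
  using assms last_less_if_reduced[OF assms] Kmat_iff_ne_gen_inv[of "last w" k]
  by (auto simp: children_def reduced_snoc)

lemma card_children:
  assumes "reduced k w" "w \<noteq> []"
  shows "card (children k w) = 2*k - 1"
  using gen_inv_less[OF last_less_if_reduced[OF assms]] by (simp add: children_eq[OF assms])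

lemma card_cone:
  "reduced k w \<Longrightarrow> w \<noteq> [] \<Longrightarrow> card (cone k w n) = (\<Sum>l\<le>n. (2*k - 1) ^ l)"
proof (induction n arbitrary: w)
  case 0
  then show ?case by (auto simp: cone_def)
next
  case (Suc n)
  have "card (cone k w (Suc n)) = 1 + (\<Sum>j\<in>children k w. \<Sum>l\<le>n. (2*k - 1) ^ l)"
    using Suc by (simp add: card_cone_Suc children_def)
  also have "\<dots> = 1 + (2*k - 1) * (\<Sum>l\<le>n. (2*k - 1) ^ l)"
    by (simp add: card_children[OF Suc.prems])
  also have "\<dots> = (\<Sum>l\<le>Suc n. (2*k - 1) ^ l)"
    by (simp only: sum.atMost_Suc_shift sum_distrib_left power_Suc) simp
  finally show ?case .
qed

lemma card_Delta_Suc: "card (Delta k (Suc n)) = 1 + 2*k * (\<Sum>l\<le>n. (2*k - 1) ^ l)"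
  unfolding Delta_eq_cone
  by (simp add: card_cone_Suc children_Nil card_cone children_def)

section \<open>The recursion for labelling counts\<close>

text \<open>The number of admissible labellings with root label a of a subtree of depth n below an
  edge of type C: the root has k children reached along C and k - 1 along the converse of C.\<close>
fun tree_count :: "nat \<Rightarrow> ('a \<Rightarrow> 'a \<Rightarrow> bool) \<Rightarrow> 'a set \<Rightarrow> nat \<Rightarrow> 'a \<Rightarrow> nat" where
  "tree_count k C E 0 a = 1"
| "tree_count k C E (Suc n) a =
     (\<Sum>b\<in>{b\<in>E. C a b}. tree_count k C E n b) ^ k *
     (\<Sum>b\<in>{b\<in>E. C\<inverse>\<inverse> a b}. tree_count k C\<inverse>\<inverse> E n b) ^ (k - 1)"

definition branch_sum :: "nat \<Rightarrow> ('a \<Rightarrow> 'a \<Rightarrow> bool) \<Rightarrow> 'a set \<Rightarrow> nat \<Rightarrow> 'a \<Rightarrow> nat" where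
  "branch_sum k C E n a = (\<Sum>b\<in>{b\<in>E. C a b}. tree_count k C E n b)"

lemma tree_count_Suc:
  "tree_count k C E (Suc n) a = branch_sum k C E n a ^ k * branch_sum k C\<inverse>\<inverse> E n a ^ (k - 1)"
  by (simp add: branch_sum_def del: conversep_iff)

declare tree_count.simps(2) [simp del]

locale converse_pair =
  fixes k :: nat and C :: "'a \<Rightarrow> 'a \<Rightarrow> bool" and E :: "'a set"
  assumes two_le_k: "2 \<le> k" and finite_E: "finite E" and E_nonempty: "E \<noteq> {}"
    and succ_ex: "a \<in> E \<Longrightarrow> \<exists>b\<in>E. C a b" and pred_ex: "a \<in> E \<Longrightarrow> \<exists>b\<in>E. C b a"
begin

definition directions :: "('a \<Rightarrow> 'a \<Rightarrow> bool) set" where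
  "directions = {C, C\<inverse>\<inverse>}"

lemma directions_conversep: "D \<in> directions \<Longrightarrow> {D, D\<inverse>\<inverse>} = directions"
  unfolding directions_def by auto

lemma conversep_in_directions: "D \<in> directions \<Longrightarrow> D\<inverse>\<inverse> \<in> directions"
  unfolding directions_def by auto

lemma directions_succ_ex: "D \<in> directions \<Longrightarrow> a \<in> E \<Longrightarrow> \<exists>b\<in>E. D a b"
  unfolding directions_def using succ_ex pred_ex by auto

lemma one_le_tree_count: "D \<in> directions \<Longrightarrow> a \<in> E \<Longrightarrow> 1 \<le> tree_count k D E n a"
  and one_le_branch_sum: "D \<in> directions \<Longrightarrow> a \<in> E \<Longrightarrow> 1 \<le> branch_sum k D E n a"
proof -
  have bs: "1 \<le> branch_sum k D E n a"
    if IH: "\<And>D b. D \<in> directions \<Longrightarrow> b \<in> E \<Longrightarrow> 1 \<le> tree_count k D E n b"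
      and D: "D \<in> directions" and a: "a \<in> E" for n D a
  proof -
    obtain b where b: "b \<in> E" "D a b" using directions_succ_ex[OF D a] by blast
    have "tree_count k D E n b \<le> branch_sum k D E n a"
      unfolding branch_sum_def using b finite_E by (intro member_le_sum) auto
    then show ?thesis using IH[OF D b(1)] by simp
  qed
  have tc: "1 \<le> tree_count k D E n a" if "D \<in> directions" "a \<in> E" for n D a
    using that
  proof (induction n arbitrary: D a)
    case (Suc n)
    then show ?case
      using bs[OF Suc.IH Suc.prems] bs[OF Suc.IH conversep_in_directions Suc.prems(2)]
      by (simp add: tree_count_Suc Suc_le_eq)
  qed simp
  show "D \<in> directions \<Longrightarrow> a \<in> E \<Longrightarrow> 1 \<le> tree_count k D E n a" by (rule tc)
  show "D \<in> directions \<Longrightarrow> a \<in> E \<Longrightarrow> 1 \<le> branch_sum k D E n a" by (rule bs[OF tc])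
qed

abbreviation q :: real where "q \<equiv> 2 * real k - 1"

abbreviation c :: real where "c \<equiv> ln (real (card E))"

lemma ln_tree_count_Suc:
  assumes "D \<in> directions" "a \<in> E"
  shows "ln (tree_count k D E (Suc n) a)
           = real k * ln (branch_sum k D E n a) + (real k - 1) * ln (branch_sum k D\<inverse>\<inverse> E n a)"
proof -
  have "0 < branch_sum k D E n a" "0 < branch_sum k D\<inverse>\<inverse> E n a"
    using one_le_branch_sum assms conversep_in_directions by (auto simp: Suc_le_eq)
  then show ?thesis
    using two_le_k by (simp add: tree_count_Suc ln_mult ln_realpow of_nat_diff)
qed

lemma ln_branch_sum_Suc_le:
  assumes D: "D \<in> directions" and a: "a \<in> E"
  shows "\<exists>b\<in>E. ln (branch_sum k D E (Suc n) a) \<le> c + ln (tree_count k D E (Suc n) b)"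
proof -
  let ?S = "{b\<in>E. D a b}"
  have "?S \<noteq> {}" using directions_succ_ex[OF D a] by blast
  then obtain b where b: "b \<in> ?S"
      and le: "ln (branch_sum k D E (Suc n) a) \<le> ln (card ?S) + ln (tree_count k D E (Suc n) b)"
    using ln_sum_le_ln_card_add[of ?S "\<lambda>b. real (tree_count k D E (Suc n) b)"]
      finite_E one_le_tree_count[OF D] by (fastforce simp: branch_sum_def Suc_le_eq)
  have "card ?S \<le> card E" using finite_E by (intro card_mono) auto
  then have "ln (card ?S) \<le> c"
    using \<open>?S \<noteq> {}\<close> finite_E by (intro ln_mono) (auto simp: card_gt_0_iff)
  then show ?thesis using b le by force
qed

definition log_max :: "nat \<Rightarrow> real" where
  "log_max n = Max ((\<lambda>(D, a). ln (branch_sum k D E n a)) ` (directions \<times> E))"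

lemma ln_branch_sum_le_log_max: "D \<in> directions \<Longrightarrow> a \<in> E \<Longrightarrow> ln (branch_sum k D E n a) \<le> log_max n"
  unfolding log_max_def using finite_E by (intro Max_ge) (auto simp: directions_def)

lemma log_max_attained: "\<exists>D\<in>directions. \<exists>a\<in>E. log_max n = ln (branch_sum k D E n a)"
proof -
  have "log_max n \<in> (\<lambda>(D, a). ln (branch_sum k D E n a)) ` (directions \<times> E)"
    unfolding log_max_def using finite_E E_nonempty
    by (intro Max_in) (auto simp: directions_def)
  then show ?thesis by auto
qed

lemma log_max_nonneg: "0 \<le> log_max n"
  using log_max_attained[of n] one_le_branch_sum by force

lemma ln_tree_count_Suc_le:
  assumes "D \<in> directions" "a \<in> E"
  shows "ln (tree_count k D E (Suc n) a) \<le> q * log_max n"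
proof -
  have "real k * ln (branch_sum k D E n a) \<le> real k * log_max n"
    "(real k - 1) * ln (branch_sum k D\<inverse>\<inverse> E n a) \<le> (real k - 1) * log_max n"
    using assms two_le_k conversep_in_directions
    by (auto intro!: mult_left_mono ln_branch_sum_le_log_max)
  then show ?thesis unfolding ln_tree_count_Suc[OF assms] by (simp add: algebra_simps)
qed

lemma log_max_Suc_le: "log_max (Suc n) \<le> q * log_max n + c"
proof -
  obtain D a where D: "D \<in> directions" and a: "a \<in> E"
    and eq: "log_max (Suc n) = ln (branch_sum k D E (Suc n) a)"
    using log_max_attained by blast
  obtain b where b: "b \<in> E" and le: "log_max (Suc n) \<le> c + ln (tree_count k D E (Suc n) b)"
    using ln_branch_sum_Suc_le[OF D a] eq by auto
  show ?thesis using le ln_tree_count_Suc_le[OF D b, of n] by linarith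
qed

abbreviation log_max_defect :: "nat \<Rightarrow> real" where
  "log_max_defect n \<equiv> q * log_max n + c - log_max (Suc n)"

text \<open>The witness is a dominant term of the branch sum at which log_max (Suc n) is attained.\<close>
lemma balanced_label_ex:
  "\<exists>b\<in>E. \<forall>D\<in>directions. log_max n - log_max_defect n \<le> ln (branch_sum k D E n b)"
proof -
  obtain D a where D: "D \<in> directions" and a: "a \<in> E"
    and eq: "log_max (Suc n) = ln (branch_sum k D E (Suc n) a)"
    using log_max_attained by blast
  obtain b where b: "b \<in> E" and le: "log_max (Suc n) \<le> c + ln (tree_count k D E (Suc n) b)"
    using ln_branch_sum_Suc_le[OF D a] eq by auto
  have "(real k + (real k - 1)) * log_max n - log_max_defect n
          \<le> real k * ln (branch_sum k D E n b) + (real k - 1) * ln (branch_sum k D\<inverse>\<inverse> E n b)"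
    using le unfolding ln_tree_count_Suc[OF D b] by simp
  from weighted_sum_near_max[OF _ _ ln_branch_sum_le_log_max[OF D b]
      ln_branch_sum_le_log_max[OF conversep_in_directions[OF D] b] _ this]
  have "log_max n - log_max_defect n \<le> ln (branch_sum k D E n b)"
    "log_max n - log_max_defect n \<le> ln (branch_sum k D\<inverse>\<inverse> E n b)"
    using two_le_k log_max_Suc_le[of n] by simp_all
  then show ?thesis using b directions_conversep[OF D] by auto
qed

lemma ln_sum_le_add_ln_card:
  fixes f :: "'a \<Rightarrow> real"
  assumes "\<And>a. a \<in> E \<Longrightarrow> 0 < f a" "\<And>a. a \<in> E \<Longrightarrow> ln (f a) \<le> T"
  shows "ln (\<Sum>a\<in>E. f a) \<le> T + c"
  using ln_sum_le_ln_card_add[OF finite_E E_nonempty, of f] assms by force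

lemma ln_le_ln_sum:
  fixes f :: "'a \<Rightarrow> real"
  assumes "\<And>a. a \<in> E \<Longrightarrow> 0 < f a" "b \<in> E"
  shows "ln (f b) \<le> ln (\<Sum>a\<in>E. f a)"
  using assms finite_E by (intro ln_mono member_le_sum) (auto intro: less_imp_le)

lemma q_gt_1: "1 < q"
  using two_le_k by simp

lemma
  shows log_max_normalized_convergent: "convergent (\<lambda>n. log_max n / q ^ n)"
    and log_max_defect_normalized: "(\<lambda>n. log_max_defect n / q ^ n) \<longlonglongrightarrow> 0"
proof -
  have "0 \<le> c"
    using finite_E E_nonempty by (simp add: card_gt_0_iff Suc_le_eq)
  then show "convergent (\<lambda>n. log_max n / q ^ n)" "(\<lambda>n. log_max_defect n / q ^ n) \<longlonglongrightarrow> 0"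
    using normalized_growth_convergent[of q c log_max, OF q_gt_1 _ log_max_nonneg log_max_Suc_le]
    by simp_all
qed

definition growth_rate :: real where
  "growth_rate = lim (\<lambda>n. log_max n / q ^ n)"

lemma log_max_normalized_limit: "(\<lambda>n. log_max n / q ^ n) \<longlonglongrightarrow> growth_rate"
  unfolding growth_rate_def using log_max_normalized_convergent
  by (rule convergent_LIMSEQ_iff[THEN iffD1])

lemma tree_count_growth:
  assumes D: "D \<in> directions"
  shows "(\<lambda>n. ln (\<Sum>a\<in>E. real (tree_count k D E n a)) / q ^ n) \<longlonglongrightarrow> growth_rate"
proof -
  let ?g = "\<lambda>n. ln (\<Sum>a\<in>E. real (tree_count k D E (Suc n) a))"
  have pos: "0 < real (tree_count k D E n a)" if "a \<in> E" for n a
    using one_le_tree_count[OF D that, of n] by simp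
  have "q * (log_max n - log_max_defect n) \<le> ?g n" for n
  proof -
    obtain b where b: "b \<in> E"
      and bal: "\<forall>D\<in>directions. log_max n - log_max_defect n \<le> ln (branch_sum k D E n b)"
      using balanced_label_ex by blast
    let ?\<mu> = "log_max n - log_max_defect n"
    have "real k * ?\<mu> \<le> real k * ln (branch_sum k D E n b)"
      "(real k - 1) * ?\<mu> \<le> (real k - 1) * ln (branch_sum k D\<inverse>\<inverse> E n b)"
      using bal D conversep_in_directions[OF D] two_le_k by (auto intro: mult_left_mono)
    moreover have "q * ?\<mu> = real k * ?\<mu> + (real k - 1) * ?\<mu>"
      by (simp add: algebra_simps)
    ultimately have "q * ?\<mu> \<le> ln (tree_count k D E (Suc n) b)"
      unfolding ln_tree_count_Suc[OF D b] by linarith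
    also have "\<dots> \<le> ?g n" using ln_le_ln_sum[OF pos b] .
    finally show ?thesis .
  qed
  moreover have "?g n \<le> q * log_max n + c" for n
    by (intro ln_sum_le_add_ln_card pos ln_tree_count_Suc_le[OF D])
  ultimately have "(\<lambda>n. ?g n / q ^ n) \<longlonglongrightarrow> q * growth_rate"
    by (intro normalized_squeeze[OF q_gt_1 log_max_normalized_limit log_max_defect_normalized])
  then have "(\<lambda>n. ?g n / q ^ n / q) \<longlonglongrightarrow> q * growth_rate / q"
    by (intro tendsto_divide) (use q_gt_1 in auto)
  moreover have "q * growth_rate / q = growth_rate"
    using q_gt_1 by simp
  ultimately have "(\<lambda>n. ?g n / q ^ Suc n) \<longlonglongrightarrow> growth_rate"
    by (simp add: ac_simps)
  then show ?thesis by (rule LIMSEQ_imp_Suc)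
qed

lemma branch_product_growth:
  "(\<lambda>n. ln (\<Sum>a\<in>E. branch_sum k C E n a ^ k * branch_sum k C\<inverse>\<inverse> E n a ^ k) / q ^ n)
     \<longlonglongrightarrow> 2 * real k * growth_rate"
proof -
  have C: "C \<in> directions" "C\<inverse>\<inverse> \<in> directions" by (simp_all add: directions_def)
  let ?f = "\<lambda>n a. real (branch_sum k C E n a) ^ k * real (branch_sum k C\<inverse>\<inverse> E n a) ^ k"
  have pos: "0 < ?f n a" if "a \<in> E" for n a
    using one_le_branch_sum[OF C(1) that, of n] one_le_branch_sum[OF C(2) that, of n] by simp
  have ln_f: "ln (?f n a)
      = real k * ln (branch_sum k C E n a) + real k * ln (branch_sum k C\<inverse>\<inverse> E n a)"
    if "a \<in> E" for n a
    using one_le_branch_sum[OF C(1) that, of n] one_le_branch_sum[OF C(2) that, of n]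
    by (simp add: ln_mult ln_realpow)
  have "2 * real k * (log_max n - log_max_defect n) \<le> ln (\<Sum>a\<in>E. ?f n a)" for n
  proof -
    obtain b where b: "b \<in> E"
      and bal: "\<forall>D\<in>directions. log_max n - log_max_defect n \<le> ln (branch_sum k D E n b)"
      using balanced_label_ex by blast
    let ?\<mu> = "log_max n - log_max_defect n"
    have "real k * ?\<mu> \<le> real k * ln (branch_sum k C E n b)"
      "real k * ?\<mu> \<le> real k * ln (branch_sum k C\<inverse>\<inverse> E n b)"
      using bal C by (auto intro: mult_left_mono)
    then have "2 * real k * ?\<mu> \<le> ln (?f n b)"
      unfolding ln_f[OF b] by linarith
    also have "\<dots> \<le> ln (\<Sum>a\<in>E. ?f n a)" using ln_le_ln_sum[OF pos b] .
    finally show ?thesis .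
  qed
  moreover have "ln (\<Sum>a\<in>E. ?f n a) \<le> 2 * real k * log_max n + c" for n
  proof -
    have "ln (?f n a) \<le> 2 * real k * log_max n" if "a \<in> E" for a
    proof -
      have bound: "real k * ln (branch_sum k D E n a) \<le> real k * log_max n"
        if "D \<in> directions" for D
        using ln_branch_sum_le_log_max[OF that \<open>a \<in> E\<close>] by (auto intro: mult_left_mono)
      show ?thesis unfolding ln_f[OF that] using bound[OF C(1)] bound[OF C(2)] by linarith
    qed
    then show ?thesis by (intro ln_sum_le_add_ln_card pos)
  qed
  ultimately show ?thesis
    by (intro normalized_squeeze[OF q_gt_1 log_max_normalized_limit log_max_defect_normalized])
      simp_all
qed

end

section \<open>Patterns of the tree shift as admissible labellings\<close>

locale AAt_shift =
  fixes k :: nat and A :: "'a::finite \<Rightarrow> 'a \<Rightarrow> bool"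
begin

abbreviation B :: "nat \<Rightarrow> 'a \<Rightarrow> 'a \<Rightarrow> bool" where
  "B \<equiv> AAt k A"

abbreviation shift :: "(nat list \<Rightarrow> 'a) set" where
  "shift \<equiv> markov_tree_shift k B"

lemma AAt_eq: "B j = (if j < k then A else A\<inverse>\<inverse>)"
  by (auto simp: AAt_def fun_eq_iff)

lemma AAt_gen_inv: "j < 2*k \<Longrightarrow> B (gen_inv k j) = (B j)\<inverse>\<inverse>"
  by (auto simp: AAt_eq gen_inv_def)

lemma mem_shift_iff: "t \<in> shift \<longleftrightarrow> (\<forall>w j. reduced k (w @ [j]) \<longrightarrow> B j (t w) (t (w @ [j])))"
proof -
  have edge: "reduced k g \<and> i < 2*k \<and> length (fmult k g [i]) = length g + 1 \<longleftrightarrow> reduced k (g @ [i])"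
    for g i
    unfolding reduced_snoc Suc_eq_plus1[symmetric] fmult_singleton_extends_iff by blast
  have step: "reduced k (g @ [i]) \<Longrightarrow> fmult k g [i] = g @ [i]" for g i
    by (simp add: fmult_singleton_eq reduced_snoc)
  show ?thesis
    unfolding markov_tree_shift_def FG_def mem_Collect_eq
  proof safe
    fix w j
    assume H: "\<forall>g\<in>{w. reduced k w}. \<forall>i<2*k.
        length (fmult k g [i]) = length g + 1 \<longrightarrow> B i (t g) (t (fmult k g [i]))"
      and r: "reduced k (w @ [j])"
    have "reduced k w" "j < 2*k" "length (fmult k w [j]) = length w + 1"
      using edge[of w j] r by blast+
    then have "B j (t w) (t (fmult k w [j]))"
      using H by blast
    then show "B j (t w) (t (w @ [j]))"
      using step[OF r] by simp
  next
    fix g i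
    assume "\<forall>w j. reduced k (w @ [j]) \<longrightarrow> B j (t w) (t (w @ [j]))"
      and "reduced k g" "i < 2*k" "length (fmult k g [i]) = length g + 1"
    then show "B i (t g) (t (fmult k g [i]))"
      using edge[of g i] step[of g i] by auto
  qed
qed

lemma translate_mem:
  assumes t: "t \<in> shift" and g: "reduced k g"
  shows "(\<lambda>w. t (fmult k g w)) \<in> shift"
  unfolding mem_shift_iff
proof (intro allI impI)
  have T: "B j (t v) (t (v @ [j]))" if "reduced k (v @ [j])" for v j
    using t that by (simp add: mem_shift_iff)
  fix w j assume "reduced k (w @ [j])"
  then have w: "reduced k w" and j: "j < 2*k" by (auto simp: reduced_snoc)
  define z where "z = fmult k g w"
  have z: "reduced k z" using fmult_reduced[OF g w] by (simp add: z_def)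
  have step: "fmult k g (w @ [j]) = app1 k z j" by (simp add: fmult_snoc z_def)
  show "B j (t (fmult k g w)) (t (fmult k g (w @ [j])))"
  proof (cases "z = [] \<or> Kmat k (last z) j")
    case True
    then have "reduced k (z @ [j])" using z j by (simp add: reduced_snoc)
    then show ?thesis using T True step by (auto simp: app1_def z_def)
  next
    case False
    then have "butlast z @ [gen_inv k j] = z"
      using last_eq_gen_inv[OF z _ j] by (metis append_butlast_last_id)
    then have "B (gen_inv k j) (t (butlast z)) (t z)"
      using T[of "butlast z" "gen_inv k j"] z by simp
    then show ?thesis
      using False step AAt_gen_inv[OF j] by (simp add: app1_def z_def)
  qed
qed

definition labels :: "'a set" where
  "labels = (\<lambda>t. t []) ` shift"

lemma label_mem: "t \<in> shift \<Longrightarrow> reduced k w \<Longrightarrow> t w \<in> labels"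
  unfolding labels_def
  by (rule image_eqI[where x = "\<lambda>v. t (fmult k w v)"]) (simp_all add: translate_mem)

lemma labels_succ_ex:
  assumes "a \<in> labels" "j < 2*k"
  shows "\<exists>b\<in>labels. B j a b"
proof -
  obtain t where "t \<in> shift" "a = t []" using assms(1) unfolding labels_def by auto
  then show ?thesis
    using assms(2) label_mem[of t "[j]"] mem_shift_iff[of t] by force
qed

lemma labels_pred_ex: "a \<in> labels \<Longrightarrow> j < 2*k \<Longrightarrow> \<exists>b\<in>labels. B j b a"
  using labels_succ_ex[of a "gen_inv k j"] AAt_gen_inv gen_inv_less by auto

definition admissible :: "nat list set \<Rightarrow> (nat list \<Rightarrow> 'a) set" where
  "admissible R = {f \<in> extensional R. (\<forall>w\<in>R. f w \<in> labels) \<and>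
     (\<forall>w j. w \<in> R \<longrightarrow> w @ [j] \<in> R \<longrightarrow> B j (f w) (f (w @ [j])))}"

lemma pcount_eq_card_restrictions:
  assumes "R \<subseteq> FG k"
  shows "pcount k shift R = card ((\<lambda>t. restrict t R) ` shift)"
proof -
  have "{u. (\<forall>h. h \<notin> R \<longrightarrow> u h = undefined) \<and> (\<exists>t\<in>shift. accepts k t R u)}
      = (\<lambda>t. restrict t R) ` shift"
  proof (intro equalityI subsetI)
    fix u assume "u \<in> {u. (\<forall>h. h \<notin> R \<longrightarrow> u h = undefined) \<and> (\<exists>t\<in>shift. accepts k t R u)}"
    then obtain t g where u: "\<forall>h. h \<notin> R \<longrightarrow> u h = undefined" and t: "t \<in> shift" and g: "g \<in> FG k"
      and eq: "\<forall>h\<in>R. t (fmult k g h) = u h"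
      unfolding accepts_def by auto
    have "u = restrict (\<lambda>w. t (fmult k g w)) R"
      using u eq by (auto simp: restrict_def)
    then show "u \<in> (\<lambda>t. restrict t R) ` shift"
      using translate_mem[OF t] g by (auto simp: FG_def)
  next
    fix u assume "u \<in> (\<lambda>t. restrict t R) ` shift"
    then obtain t where t: "t \<in> shift" "u = restrict t R" by auto
    have "accepts k t R u"
      unfolding accepts_def using assms t(2) fmult_eq_append[of k "[]"]
      by (intro bexI[of _ "[]"]) (auto simp: FG_def)
    then show "u \<in> {u. (\<forall>h. h \<notin> R \<longrightarrow> u h = undefined) \<and> (\<exists>t\<in>shift. accepts k t R u)}"
      using t by auto
  qed
  then show ?thesis unfolding pcount_def by simp
qed

lemma restrict_mem_admissible: "R \<subseteq> FG k \<Longrightarrow> t \<in> shift \<Longrightarrow> restrict t R \<in> admissible R"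
  unfolding admissible_def using label_mem mem_shift_iff by (auto simp: FG_def)

lemma restrict_admissible_subset: "R' \<subseteq> R \<Longrightarrow> f \<in> admissible R \<Longrightarrow> restrict f R' \<in> admissible R'"
  unfolding admissible_def by auto

definition succ_label :: "nat \<Rightarrow> 'a \<Rightarrow> 'a" where
  "succ_label j a = (SOME b. b \<in> labels \<and> B j a b)"

lemma succ_label: "a \<in> labels \<Longrightarrow> j < 2*k \<Longrightarrow> succ_label j a \<in> labels \<and> B j a (succ_label j a)"
  unfolding succ_label_def using labels_succ_ex by (metis (mono_tags, lifting) someI_ex)

text \<open>Outside R, labels are chosen successively away from the root, starting from c at the
  root; the recursion runs over the reversed word, i.e. from a vertex to its parent.\<close>
primrec extend_rev :: "nat list set \<Rightarrow> (nat list \<Rightarrow> 'a) \<Rightarrow> 'a \<Rightarrow> nat list \<Rightarrow> 'a" where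
  "extend_rev R f c [] = (if [] \<in> R then f [] else c)"
| "extend_rev R f c (j # v) =
     (if rev (j # v) \<in> R then f (rev (j # v)) else succ_label j (extend_rev R f c v))"

lemma extend_rev_mem: "w \<in> R \<Longrightarrow> extend_rev R f c (rev w) = f w"
  by (cases w rule: rev_exhaust) auto

lemma extension:
  assumes f: "f \<in> admissible R" and c: "c \<in> labels"
    and boundary: "\<And>v j. v @ [j] \<in> R \<Longrightarrow> v \<notin> R \<Longrightarrow> v = [] \<and> B j c (f [j])"
  shows "(\<lambda>w. extend_rev R f c (rev w)) \<in> shift" "restrict (\<lambda>w. extend_rev R f c (rev w)) R = f"
proof -
  have labels: "extend_rev R f c v \<in> labels" if "set v \<subseteq> {..<2*k}" for v
    using that f c by (induction v) (auto simp: admissible_def succ_label)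
  show "(\<lambda>w. extend_rev R f c (rev w)) \<in> shift"
    unfolding mem_shift_iff
  proof (intro allI impI)
    fix w j assume "reduced k (w @ [j])"
    then have j: "j < 2*k" and "set w \<subseteq> {..<2*k}"
      by (auto simp: reduced_iff_successively)
    then have w: "extend_rev R f c (rev w) \<in> labels" using labels by simp
    show "B j (extend_rev R f c (rev w)) (extend_rev R f c (rev (w @ [j])))"
    proof (cases "w @ [j] \<in> R")
      case True
      then show ?thesis
        using f boundary[OF True] extend_rev_mem[of w R f c] unfolding admissible_def
        by (cases "w \<in> R") auto
    qed (use succ_label[OF w j] in simp)
  qed
  show "restrict (\<lambda>w. extend_rev R f c (rev w)) R = f"
    using f extend_rev_mem by (auto simp: restrict_def admissible_def fun_eq_iff extensional_def)
qed

lemma cone_boundary: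
  assumes "v @ [j] \<in> cone k w n" "v \<notin> cone k w n"
  shows "v @ [j] = w"
proof -
  obtain h where h: "reduced k (v @ [j])" "v @ [j] = w @ h" "length h \<le> n"
    using assms(1) by (auto simp: mem_cone_iff)
  show ?thesis
  proof (cases h rule: rev_exhaust)
    case (snoc h' x)
    then have "reduced k v" "v = w @ h'"
      using h reduced_appendD[of k v "[j]"] by auto
    then have "v \<in> cone k w n"
      using h snoc by (auto simp: mem_cone_iff)
    then show ?thesis using assms(2) by simp
  qed (use h in simp)
qed

lemma cone_restrictions:
  assumes "reduced k w" "length w \<le> 1" "labels \<noteq> {}"
  shows "(\<lambda>t. restrict t (cone k w n)) ` shift = admissible (cone k w n)"
proof (intro equalityI subsetI)
  fix f assume f: "f \<in> admissible (cone k w n)"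
  obtain c where c: "c \<in> labels" and root: "\<And>j. w = [j] \<Longrightarrow> B j c (f [j])"
  proof (cases w)
    case Nil
    then show ?thesis using that assms(3) by auto
  next
    case (Cons i w')
    then have w: "w = [i]" "i < 2*k" using assms(1,2) by auto
    then have "f [i] \<in> labels"
      using f root_mem_cone[OF assms(1)] by (auto simp: admissible_def)
    then show ?thesis using that labels_pred_ex w by blast
  qed
  have "v = [] \<and> B j c (f [j])" if "v @ [j] \<in> cone k w n" "v \<notin> cone k w n" for v j
    using cone_boundary[OF that] root assms(2) by (cases v) auto
  from extension[OF f c this]
  show "f \<in> (\<lambda>t. restrict t (cone k w n)) ` shift"
    by (intro image_eqI) simp_all
qed (use restrict_mem_admissible[OF cone_subset_FG] in blast)

section \<open>Counting patterns on cones\<close>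

definition rooted_count :: "nat list \<Rightarrow> nat \<Rightarrow> 'a \<Rightarrow> nat" where
  "rooted_count w n a = card {f \<in> admissible (cone k w n). f w = a}"

lemma admissibleI:
  assumes "f \<in> extensional R" "\<And>v. v \<in> R \<Longrightarrow> f v \<in> labels"
    "\<And>v j. v \<in> R \<Longrightarrow> v @ [j] \<in> R \<Longrightarrow> B j (f v) (f (v @ [j]))"
  shows "f \<in> admissible R"
  using assms by (simp add: admissible_def)

lemma
  assumes "f \<in> admissible R"
  shows admissible_extensional: "f \<in> extensional R"
    and admissible_label: "v \<in> R \<Longrightarrow> f v \<in> labels"
    and admissible_edge: "v \<in> R \<Longrightarrow> v @ [j] \<in> R \<Longrightarrow> B j (f v) (f (v @ [j]))"
  using assms by (simp_all add: admissible_def)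

lemma finite_admissible: "finite R \<Longrightarrow> finite (admissible R)"
  by (rule finite_subset[OF _ finite_PiE[of R "\<lambda>_. UNIV"]]) (auto simp: admissible_def PiE_def)

lemma card_admissible_cone:
  assumes "reduced k w"
  shows "card (admissible (cone k w n)) = (\<Sum>a\<in>labels. rooted_count w n a)"
  unfolding rooted_count_def using root_mem_cone[OF assms]
  by (intro card_eq_sum_card_fibres finite_admissible finite_cone) (auto simp: admissible_def)

lemma rooted_count_0:
  assumes "reduced k w" "a \<in> labels"
  shows "rooted_count w 0 a = 1"
proof -
  have "{f \<in> admissible {w}. f w = a} = {\<lambda>v. if v = w then a else undefined}"
  proof (intro equalityI subsetI)
    fix f assume "f \<in> {f \<in> admissible {w}. f w = a}"
    then show "f \<in> {\<lambda>v. if v = w then a else undefined}"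
      using admissible_extensional[of f "{w}"] by (auto simp: fun_eq_iff extensional_def)
  next
    fix f assume "f \<in> {\<lambda>v. if v = w then a else undefined}"
    moreover have "(\<lambda>v. if v = w then a else undefined) \<in> admissible {w}"
      using assms(2) by (intro admissibleI) (auto simp: extensional_def)
    ultimately show "f \<in> {f \<in> admissible {w}. f w = a}" by simp
  qed
  moreover have "cone k w 0 = {w}"
    using assms(1) by (auto simp: cone_def)
  ultimately show ?thesis
    unfolding rooted_count_def by simp
qed

lemma cone_Suc_edge:
  assumes w: "reduced k w" and v: "v \<in> cone k w (Suc n)" "v \<noteq> w"
    and vj: "v @ [j] \<in> cone k w (Suc n)"
  shows "\<exists>i\<in>children k w. v \<in> cone k (w @ [i]) n \<and> v @ [j] \<in> cone k (w @ [i]) n"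
proof -
  obtain i where i: "i \<in> children k w" "v \<in> cone k (w @ [i]) n"
    using v cone_Suc[OF w] by auto
  obtain i' where i': "i' \<in> children k w" "v @ [j] \<in> cone k (w @ [i']) n"
    using vj v cone_Suc[OF w] by (auto simp: mem_cone_iff)
  have "i' = i"
    using mem_child_cone[OF i(2)] mem_child_cone[OF i'(2)] by (simp add: nth_append)
  then show ?thesis using i i' by blast
qed

lemma admissible_cone_Suc_restrict:
  assumes w: "reduced k w" and f: "f \<in> admissible (cone k w (Suc n))" and j: "j \<in> children k w"
  shows "restrict f (cone k (w @ [j]) n) \<in> admissible (cone k (w @ [j]) n)"
    and "B j (f w) (f (w @ [j]))"
proof -
  have sub: "cone k (w @ [j]) n \<subseteq> cone k w (Suc n)"
    using cone_Suc[OF w] j by blast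
  show "restrict f (cone k (w @ [j]) n) \<in> admissible (cone k (w @ [j]) n)"
    using sub f by (rule restrict_admissible_subset)
  show "B j (f w) (f (w @ [j]))"
    using admissible_edge[OF f root_mem_cone[OF w]] sub child_mem_cone[OF j] by blast
qed

lemma admissible_cone_SucI:
  assumes w: "reduced k w" and f: "f \<in> extensional (cone k w (Suc n))" and root: "f w \<in> labels"
    and children: "\<And>j. j \<in> children k w \<Longrightarrow>
      restrict f (cone k (w @ [j]) n) \<in> admissible (cone k (w @ [j]) n) \<and> B j (f w) (f (w @ [j]))"
  shows "f \<in> admissible (cone k w (Suc n))"
proof (rule admissibleI[OF f])
  have child_value: "f v = restrict f (cone k (w @ [j]) n) v" if "v \<in> cone k (w @ [j]) n" for v j
    using that by simp
  fix v assume "v \<in> cone k w (Suc n)"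
  then consider "v = w" | j where "j \<in> children k w" "v \<in> cone k (w @ [j]) n"
    using cone_Suc[OF w] by blast
  then show "f v \<in> labels"
  proof cases
    case 2
    then show ?thesis using admissible_label[OF conjunct1[OF children]] child_value by metis
  qed (use root in simp)
  fix j assume vj: "v @ [j] \<in> cone k w (Suc n)"
  show "B j (f v) (f (v @ [j]))"
  proof (cases "v = w")
    case True
    then have "j \<in> children k w"
      using vj by (auto simp: mem_cone_iff children_def reduced_snoc)
    then show ?thesis using True children by blast
  next
    case False
    then obtain i where i: "i \<in> children k w"
      and "v \<in> cone k (w @ [i]) n" "v @ [j] \<in> cone k (w @ [i]) n"
      using cone_Suc_edge[OF w \<open>v \<in> cone k w (Suc n)\<close> False vj] by blast
    then show ?thesis
      using admissible_edge[OF conjunct1[OF children[OF i]]] child_value by metis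
  qed
qed

lemma rooted_labellings_Suc:
  assumes w: "reduced k w" and a: "a \<in> labels"
  shows "{f \<in> admissible (cone k w (Suc n)). f w = a}
    = {f \<in> extensional (cone k w (Suc n)). f w = a \<and> (\<forall>j\<in>children k w.
         restrict f (cone k (w @ [j]) n) \<in> {g \<in> admissible (cone k (w @ [j]) n). B j a (g (w @ [j]))})}"
    (is "?L = ?R")
proof (intro equalityI subsetI)
  fix f assume "f \<in> ?L"
  then have f: "f \<in> admissible (cone k w (Suc n))" and fw: "f w = a" by auto
  have "restrict f (cone k (w @ [j]) n) \<in> {g \<in> admissible (cone k (w @ [j]) n). B j a (g (w @ [j]))}"
    if "j \<in> children k w" for j
    using admissible_cone_Suc_restrict[OF w f that] child_mem_cone[OF that] fw by simp
  then show "f \<in> ?R"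
    using admissible_extensional[OF f] fw by blast
next
  fix f assume "f \<in> ?R"
  then show "f \<in> ?L"
    using a child_mem_cone by (auto intro!: admissible_cone_SucI[OF w])
qed

lemma rooted_count_Suc:
  assumes w: "reduced k w" and a: "a \<in> labels"
  shows "rooted_count w (Suc n) a
           = (\<Prod>j\<in>children k w. \<Sum>b\<in>{b\<in>labels. B j a b}. rooted_count (w @ [j]) n b)"
proof -
  let ?R = "\<lambda>j. cone k (w @ [j]) n"
  let ?Q = "\<lambda>j. {g \<in> admissible (?R j). B j a (g (w @ [j]))}"
  have "rooted_count w (Suc n) a
      = card {f \<in> extensional (cone k w (Suc n)).
          f w = a \<and> (\<forall>j\<in>children k w. restrict f (?R j) \<in> ?Q j)}"
    unfolding rooted_count_def rooted_labellings_Suc[OF w a] ..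
  also have "\<dots> = (\<Prod>j\<in>children k w. card (?Q j))"
    unfolding cone_Suc[OF w]
  proof (rule card_glued_functions[OF finite_children])
    show "disjoint_family_on ?R (children k w)"
      unfolding disjoint_family_on_def using mem_child_cone by blast
    show "w \<notin> (\<Union>j\<in>children k w. ?R j)"
      using mem_child_cone by blast
  qed (auto dest: admissible_extensional)
  also have "\<dots> = (\<Prod>j\<in>children k w. \<Sum>b\<in>{b\<in>labels. B j a b}. rooted_count (w @ [j]) n b)"
  proof (rule prod.cong[OF refl])
    fix j assume j: "j \<in> children k w"
    have "finite (?Q j)"
      by (rule finite_subset[OF _ finite_admissible[OF finite_cone]]) auto
    then have "card (?Q j) = (\<Sum>b\<in>{b\<in>labels. B j a b}. card {g \<in> ?Q j. g (w @ [j]) = b})"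
      using child_mem_cone[OF j] by (intro card_eq_sum_card_fibres) (auto intro: admissible_label)
    also have "\<dots> = (\<Sum>b\<in>{b\<in>labels. B j a b}. rooted_count (w @ [j]) n b)"
      unfolding rooted_count_def by (intro sum.cong refl arg_cong[where f = card]) auto
    finally show "card (?Q j) = (\<Sum>b\<in>{b\<in>labels. B j a b}. rooted_count (w @ [j]) n b)" .
  qed
  finally show ?thesis .
qed

lemma prod_AAt:
  fixes F :: "('a \<Rightarrow> 'a \<Rightarrow> bool) \<Rightarrow> 'b::comm_monoid_mult"
  assumes "finite J"
  shows "(\<Prod>j\<in>J. F (B j)) = F A ^ card {j\<in>J. j < k} * F A\<inverse>\<inverse> ^ card {j\<in>J. \<not> j < k}"
  using assms
  by (simp add: AAt_eq if_distrib prod.If_cases Int_def Collect_conj_eq[symmetric] set_diff_eq)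

lemma prod_children:
  fixes F :: "('a \<Rightarrow> 'a \<Rightarrow> bool) \<Rightarrow> 'b::comm_monoid_mult"
  assumes w: "reduced k w" "w \<noteq> []"
  shows "(\<Prod>j\<in>children k w. F (B j)) = F (B (last w)) ^ k * F (B (last w))\<inverse>\<inverse> ^ (k - 1)"
proof -
  let ?l = "last w"
  have l: "?l < 2*k" using last_less_if_reduced[OF w] .
  show ?thesis
  proof (cases "?l < k")
    case True
    then have "{j\<in>children k w. j < k} = {..<k}" "{j\<in>children k w. \<not> j < k} = {k..<2*k} - {?l + k}"
      using l by (auto simp: children_eq[OF w] gen_inv_def)
    then show ?thesis
      unfolding prod_AAt[OF finite_children] using True l by (simp add: AAt_eq)
  next
    case False
    then have "{j\<in>children k w. j < k} = {..<k} - {?l - k}" "{j\<in>children k w. \<not> j < k} = {k..<2*k}"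
      using l by (auto simp: children_eq[OF w] gen_inv_def)
    then show ?thesis
      unfolding prod_AAt[OF finite_children] using False l by (simp add: AAt_eq mult.commute)
  qed
qed

lemma prod_root:
  fixes F :: "('a \<Rightarrow> 'a \<Rightarrow> bool) \<Rightarrow> 'b::comm_monoid_mult"
  shows "(\<Prod>j\<in>children k []. F (B j)) = F A ^ k * F A\<inverse>\<inverse> ^ k"
proof -
  have "{j\<in>children k []. j < k} = {..<k}" "{j\<in>children k []. \<not> j < k} = {k..<2*k}"
    by (auto simp: children_Nil)
  then show ?thesis unfolding prod_AAt[OF finite_children] by simp
qed

lemma rooted_count_eq_tree_count:
  "reduced k w \<Longrightarrow> w \<noteq> [] \<Longrightarrow> a \<in> labels \<Longrightarrow> rooted_count w n a = tree_count k (B (last w)) labels n a"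
proof (induction n arbitrary: w a)
  case 0
  then show ?case by (simp add: rooted_count_0)
next
  case (Suc n)
  have "rooted_count w (Suc n) a = (\<Prod>j\<in>children k w. branch_sum k (B j) labels n a)"
    unfolding rooted_count_Suc[OF Suc.prems(1,3)] branch_sum_def
    using Suc.IH by (intro prod.cong sum.cong refl) (auto simp: children_def)
  also have "\<dots> = tree_count k (B (last w)) labels (Suc n) a"
    using prod_children[OF Suc.prems(1,2), of "\<lambda>C. branch_sum k C labels n a"]
    by (simp add: tree_count_Suc)
  finally show ?case .
qed

lemma rooted_count_Nil_Suc:
  assumes "a \<in> labels"
  shows "rooted_count [] (Suc n) a
           = branch_sum k A labels n a ^ k * branch_sum k A\<inverse>\<inverse> labels n a ^ k"
proof -
  have "rooted_count [] (Suc n) a = (\<Prod>j\<in>children k []. branch_sum k (B j) labels n a)"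
    unfolding rooted_count_Suc[OF reduced_Nil assms] branch_sum_def
    using rooted_count_eq_tree_count by (intro prod.cong sum.cong refl) (auto simp: children_def)
  then show ?thesis
    using prod_root[of "\<lambda>C. branch_sum k C labels n a"] by simp
qed

lemma pcount_Delta_Suc:
  assumes "labels \<noteq> {}"
  shows "pcount k shift (Delta k (Suc n))
           = (\<Sum>a\<in>labels. branch_sum k A labels n a ^ k * branch_sum k A\<inverse>\<inverse> labels n a ^ k)"
  using assms
  by (simp add: Delta_eq_cone pcount_eq_card_restrictions[OF cone_subset_FG] cone_restrictions
      card_admissible_cone rooted_count_Nil_Suc)

lemma pcount_Delta_bar:
  assumes "i < 2*k" "labels \<noteq> {}"
  shows "pcount k shift (Delta_bar k [i] n) = (\<Sum>a\<in>labels. tree_count k (B i) labels n a)"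
  using assms
  by (simp add: Delta_bar_eq_cone pcount_eq_card_restrictions[OF cone_subset_FG] cone_restrictions
      card_admissible_cone rooted_count_eq_tree_count)

lemma converse_pair_labels:
  assumes "2 \<le> k" "labels \<noteq> {}"
  shows "converse_pair k A labels"
proof
  fix a assume "a \<in> labels"
  then show "\<exists>b\<in>labels. A a b" "\<exists>b\<in>labels. A b a"
    using labels_succ_ex[of a 0] labels_pred_ex[of a 0] assms(1) by (simp_all add: AAt_eq)
qed (use assms in simp_all)

section \<open>Entropy along balls and stems\<close>

definition entropy :: real where
  "entropy = converse_pair.growth_rate k A labels * (1 - 1 / (2 * real k - 1))"

lemma ball_entropy_limit:
  assumes "2 \<le> k" "labels \<noteq> {}"
  shows "(\<lambda>n. ln (pcount k shift (Delta k n)) / card (Delta k n)) \<longlonglongrightarrow> entropy"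
proof -
  interpret converse_pair k A labels
    using converse_pair_labels[OF assms] .
  have q: "real (2*k - 1) = q" using assms(1) by simp
  have "(\<lambda>n. ln (pcount k shift (Delta k (Suc n))) / q ^ n) \<longlonglongrightarrow> 2 * real k * growth_rate"
    using branch_product_growth by (simp add: pcount_Delta_Suc[OF assms(2)])
  moreover have "(\<lambda>n. card (Delta k (Suc n)) / q ^ n) \<longlonglongrightarrow> 0 + 2 * real k * (q / (q - 1))"
  proof -
    have "card (Delta k (Suc n)) / q ^ n
        = inverse (q ^ n) + 2 * real k * ((\<Sum>l\<le>n. q ^ l) / q ^ n)" for n
      unfolding card_Delta_Suc using q_gt_1 by (simp add: q[symmetric] field_simps)
    moreover have "(\<lambda>n. inverse (q ^ n) + 2 * real k * ((\<Sum>l\<le>n. q ^ l) / q ^ n))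
        \<longlonglongrightarrow> 0 + 2 * real k * (q / (q - 1))"
      using q_gt_1
      by (intro tendsto_intros LIMSEQ_inverse_realpow_zero geometric_sum_over_last) auto
    ultimately show ?thesis by simp
  qed
  ultimately have "(\<lambda>n. ln (pcount k shift (Delta k (Suc n))) / card (Delta k (Suc n)))
      \<longlonglongrightarrow> 2 * real k * growth_rate / (0 + 2 * real k * (q / (q - 1)))"
    by (rule tendsto_ratio_of_normalized[where s = "\<lambda>n. q ^ n"]) (use q_gt_1 assms(1) in auto)
  moreover have "2 * real k * growth_rate / (0 + 2 * real k * (q / (q - 1))) = entropy"
    unfolding entropy_def using q_gt_1 assms(1) by (simp add: field_simps)
  ultimately show ?thesis by (simp add: LIMSEQ_imp_Suc)
qed

lemma stem_entropy_limit:
  assumes "2 \<le> k" "labels \<noteq> {}" "i < 2*k"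
  shows "(\<lambda>n. ln (pcount k shift (Delta_bar k [i] n)) / card (Delta_bar k [i] n)) \<longlonglongrightarrow> entropy"
proof -
  interpret converse_pair k A labels
    using converse_pair_labels[OF assms(1,2)] .
  have q: "real (2*k - 1) = q" using assms(1) by simp
  have "B i \<in> directions" by (simp add: directions_def AAt_eq)
  then have "(\<lambda>n. ln (pcount k shift (Delta_bar k [i] n)) / q ^ n) \<longlonglongrightarrow> growth_rate"
    using tree_count_growth by (simp add: pcount_Delta_bar[OF assms(3,2)])
  moreover have "real (card (Delta_bar k [i] n)) = (\<Sum>l\<le>n. q ^ l)" for n
  proof -
    have "card (Delta_bar k [i] n) = (\<Sum>l\<le>n. (2*k - 1) ^ l)"
      using assms(3) by (simp add: Delta_bar_eq_cone card_cone)
    then show ?thesis unfolding q[symmetric] by simp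
  qed
  then have "(\<lambda>n. card (Delta_bar k [i] n) / q ^ n) \<longlonglongrightarrow> q / (q - 1)"
    using geometric_sum_over_last[OF q_gt_1] by simp
  ultimately have "(\<lambda>n. ln (pcount k shift (Delta_bar k [i] n)) / card (Delta_bar k [i] n))
      \<longlonglongrightarrow> growth_rate / (q / (q - 1))"
    by (rule tendsto_ratio_of_normalized[where s = "\<lambda>n. q ^ n"]) (use q_gt_1 in auto)
  moreover have "growth_rate / (q / (q - 1)) = entropy"
    unfolding entropy_def using q_gt_1 by (simp add: field_simps)
  ultimately show ?thesis by simp
qed

end

theorem proposition4p5:
  fixes k :: nat and A :: "'a::finite \<Rightarrow> 'a \<Rightarrow> bool"
  assumes "k \<ge> 2"
  defines "X \<equiv> markov_tree_shift k (AAt k A)"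
  shows "\<exists>L. (\<lambda>n. ln (real (pcount k X (Delta k n))) / real (card (Delta k n))) \<longlonglongrightarrow> L
            \<and> (\<forall>i<2*k. stem_entropy k X i = ereal L)"
proof -
  interpret AAt_shift k A .
  show ?thesis
  proof (cases "labels = {}")
    case True
    txt \<open>Then X is empty, every pattern count is 0, and ln 0 = 0.\<close>
    then have "pcount k X H = 0" for H
      unfolding X_def pcount_def labels_def by simp
    then show ?thesis
      by (intro exI[of _ 0]) (simp add: stem_entropy_def Limsup_const)
  next
    case False
    have "stem_entropy k X i = ereal entropy" if "i < 2*k" for i
      unfolding stem_entropy_def X_def
      using stem_entropy_limit[OF assms(1) False that]
      by (intro lim_imp_Limsup tendsto_ereal) simp_all
    then show ?thesis
      using ball_entropy_limit[OF assms(1) False] unfolding X_def by blast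
  qed
qed

end
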